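(* For every finite configuration $F\subseteq\mathbb{R}^d$ there is a real $\varepsilon>0$ such that for all functions $\rho,\sigma\colon F\to F$ the following holds: if there is a real $q$ with $$\Big|\,q\|f'-f''\|^2-\big(\rho(f')-\rho(f'')\big)\cdot\big(\sigma(f')-\sigma(f'')\big)\Big|\leq\varepsilon\quad\text{for all } f',f''\in F,$$ then there is a real $\overline{q}$ with $$\overline{q}\|f'-f''\|^2=\big(\rho(f')-\rho(f'')\big)\cdot\big(\sigma(f')-\sigma(f'')\big)\quad\text{for all } f',f''\in F.$$
   Context: $\|\cdot\|$ is the Euclidean norm on $\mathbb{R}^d$ and $x\cdot y$ is the standard scalar product. *)

theory Defs
  imports "HOL-Analysis.Analysis"
begin

end

theory Submission
  imports Defs
begin

text \<open>Write \<open>n(f',f'') = \<parallel>f' - f''\<parallel>\<^sup>2\<close> and \<open>D(f',f'') = (\<rho> f' - \<rho> f'') \<bullet> (\<sigma> f' - \<sigma> f'')\<close>.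
  Exact proportionality \<open>D = q n\<close> is equivalent to the cross identities
  \<open>D(a,b) n(c,d) = D(c,d) n(a,b)\<close>, and approximate proportionality up to \<open>\<epsilon>\<close> bounds each
  cross difference by \<open>2 \<epsilon> max n\<close>. Since \<open>\<rho>\<close> and \<open>\<sigma>\<close> map \<open>F\<close> into \<open>F\<close>, all cross
  differences lie in a finite set of reals that depends on \<open>F\<close> only, so an \<open>\<epsilon>\<close> below its
  smallest nonzero element forces every cross difference to vanish.\<close>

lemma cross_difference_bound:
  fixes q n1 n2 d1 d2 e :: real
  assumes "\<bar>q * n1 - d1\<bar> \<le> e" and "\<bar>q * n2 - d2\<bar> \<le> e"
  shows "\<bar>d1 * n2 - d2 * n1\<bar> \<le> e * (\<bar>n1\<bar> + \<bar>n2\<bar>)"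
proof -
  have "d1 * n2 - d2 * n1 = (q * n2 - d2) * n1 - (q * n1 - d1) * n2"
    by algebra
  also have "\<bar>\<dots>\<bar> \<le> \<bar>q * n2 - d2\<bar> * \<bar>n1\<bar> + \<bar>q * n1 - d1\<bar> * \<bar>n2\<bar>"
    by (metis abs_mult abs_triangle_ineq4)
  also have "\<dots> \<le> e * \<bar>n1\<bar> + e * \<bar>n2\<bar>"
    using assms by (intro add_mono mult_right_mono) auto
  finally show ?thesis
    by (simp add: distrib_left)
qed

lemma finite_proportionality_gap:
  fixes N V :: "real set"
  assumes "finite N" and "finite V"
  obtains \<epsilon> :: real where "\<epsilon> > 0"
    and "\<And>q n1 n2 d1 d2. n1 \<in> N \<Longrightarrow> n2 \<in> N \<Longrightarrow> d1 \<in> V \<Longrightarrow> d2 \<in> V \<Longrightarrow>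
           \<bar>q * n1 - d1\<bar> \<le> \<epsilon> \<Longrightarrow> \<bar>q * n2 - d2\<bar> \<le> \<epsilon> \<Longrightarrow> d1 * n2 = d2 * n1"
proof -
  define gaps where
    "gaps = (\<lambda>(d1, d2, n1, n2). \<bar>d1 * n2 - d2 * n1\<bar>) ` (V \<times> V \<times> N \<times> N) - {0}"
  define m where "m = Min (insert 1 gaps)"
  define B where "B = Max (insert 0 (abs ` N))"
  have "finite gaps"
    unfolding gaps_def using assms by simp
  then have m_pos: "m > 0" and m_le: "\<And>g. g \<in> gaps \<Longrightarrow> m \<le> g"
    unfolding m_def gaps_def by auto
  have B_nonneg: "B \<ge> 0" and le_B: "\<And>n. n \<in> N \<Longrightarrow> \<bar>n\<bar> \<le> B"
    unfolding B_def using assms(1) by auto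
  define \<epsilon> where "\<epsilon> = m / (2 * B + 1)"
  have "\<epsilon> > 0"
    unfolding \<epsilon>_def using m_pos B_nonneg by simp
  moreover have "d1 * n2 = d2 * n1"
    if N: "n1 \<in> N" "n2 \<in> N" and V: "d1 \<in> V" "d2 \<in> V"
      and q: "\<bar>q * n1 - d1\<bar> \<le> \<epsilon>" "\<bar>q * n2 - d2\<bar> \<le> \<epsilon>" for q n1 n2 d1 d2
  proof (rule ccontr)
    assume "d1 * n2 \<noteq> d2 * n1"
    then have "\<bar>d1 * n2 - d2 * n1\<bar> \<in> gaps"
      unfolding gaps_def using N V by (force intro: image_eqI[of _ _ "(d1, d2, n1, n2)"])
    then have "m \<le> \<bar>d1 * n2 - d2 * n1\<bar>"
      by (rule m_le)
    also have "\<dots> \<le> \<epsilon> * (\<bar>n1\<bar> + \<bar>n2\<bar>)"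
      using q by (rule cross_difference_bound)
    also have "\<dots> \<le> \<epsilon> * (2 * B)"
      using le_B[OF N(1)] le_B[OF N(2)] \<open>\<epsilon> > 0\<close> by simp
    also have "\<dots> < m"
      unfolding \<epsilon>_def using m_pos B_nonneg by (simp add: field_simps)
    finally show False
      by simp
  qed
  ultimately show ?thesis
    using that by blast
qed

lemma proportional_if_cross_products_eq:
  fixes n D :: "'b \<Rightarrow> real"
  assumes cross: "\<And>x y. x \<in> S \<Longrightarrow> y \<in> S \<Longrightarrow> D x * n y = D y * n x"
    and zero: "\<And>x. x \<in> S \<Longrightarrow> n x = 0 \<Longrightarrow> D x = 0"
  shows "\<exists>c. \<forall>x\<in>S. c * n x = D x"
proof (cases "\<exists>x0\<in>S. n x0 \<noteq> 0")
  case True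
  then obtain x0 where "x0 \<in> S" "n x0 \<noteq> 0"
    by blast
  then have "\<forall>x\<in>S. D x0 / n x0 * n x = D x"
    using cross by (simp add: field_simps)
  then show ?thesis
    by blast
next
  case False
  then show ?thesis
    using zero by auto
qed

lemma approximately_proportional_imp_proportional:
  fixes N V :: "real set"
  assumes "finite N" and "finite V"
  obtains \<epsilon> :: real where "\<epsilon> > 0"
    and "\<And>S n D q. n ` S \<subseteq> N \<Longrightarrow> D ` S \<subseteq> V \<Longrightarrow> (\<And>x. x \<in> S \<Longrightarrow> n x = 0 \<Longrightarrow> D x = 0) \<Longrightarrow>
           (\<And>x. x \<in> S \<Longrightarrow> \<bar>q * n x - D x\<bar> \<le> \<epsilon>) \<Longrightarrow> \<exists>c. \<forall>x\<in>S. c * n x = D x"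
proof -
  obtain \<epsilon> where "\<epsilon> > 0" and gap: "\<And>q n1 n2 d1 d2. n1 \<in> N \<Longrightarrow> n2 \<in> N \<Longrightarrow> d1 \<in> V \<Longrightarrow> d2 \<in> V \<Longrightarrow>
      \<bar>q * n1 - d1\<bar> \<le> \<epsilon> \<Longrightarrow> \<bar>q * n2 - d2\<bar> \<le> \<epsilon> \<Longrightarrow> d1 * n2 = d2 * n1"
    using finite_proportionality_gap[OF assms] by blast
  show thesis
  proof (rule that[OF \<open>\<epsilon> > 0\<close>])
    fix S and n D :: "_ \<Rightarrow> real" and q
    assume "n ` S \<subseteq> N" "D ` S \<subseteq> V" and zero: "\<And>x. x \<in> S \<Longrightarrow> n x = 0 \<Longrightarrow> D x = 0"
      and "\<And>x. x \<in> S \<Longrightarrow> \<bar>q * n x - D x\<bar> \<le> \<epsilon>"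
    then have "D x * n y = D y * n x" if "x \<in> S" "y \<in> S" for x y
      using that by (intro gap[of _ _ _ _ q]) auto
    then show "\<exists>c. \<forall>x\<in>S. c * n x = D x"
      using zero by (rule proportional_if_cross_products_eq)
  qed
qed

theorem lemma2p1:
  fixes F :: "'a::euclidean_space set"
  assumes "finite F"
  shows "\<exists>\<epsilon>>0. \<forall>\<rho> \<sigma>. (\<forall>f\<in>F. \<rho> f \<in> F) \<longrightarrow> (\<forall>f\<in>F. \<sigma> f \<in> F) \<longrightarrow>
           (\<exists>q::real. \<forall>f'\<in>F. \<forall>f''\<in>F.
              \<bar>q * (norm (f' - f''))\<^sup>2 - (\<rho> f' - \<rho> f'') \<bullet> (\<sigma> f' - \<sigma> f'')\<bar> \<le> \<epsilon>) \<longrightarrow>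
           (\<exists>qbar::real. \<forall>f'\<in>F. \<forall>f''\<in>F.
              qbar * (norm (f' - f''))\<^sup>2 = (\<rho> f' - \<rho> f'') \<bullet> (\<sigma> f' - \<sigma> f''))"
proof -
  let ?N = "(\<lambda>(a, b). (norm (a - b))\<^sup>2) ` (F \<times> F)"
  let ?V = "(\<lambda>(x, y, z, w). (x - y) \<bullet> (z - w)) ` (F \<times> F \<times> F \<times> F)"
  have "finite ?N" "finite ?V"
    using assms by auto
  then obtain \<epsilon> where "\<epsilon> > 0" and exact: "\<And>(S :: ('a \<times> 'a) set) n D q. n ` S \<subseteq> ?N \<Longrightarrow> D ` S \<subseteq> ?V \<Longrightarrow>
      (\<And>x. x \<in> S \<Longrightarrow> n x = 0 \<Longrightarrow> D x = 0) \<Longrightarrow> (\<And>x. x \<in> S \<Longrightarrow> \<bar>q * n x - D x\<bar> \<le> \<epsilon>) \<Longrightarrow>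
      \<exists>c. \<forall>x\<in>S. c * n x = D x"
    by (rule approximately_proportional_imp_proportional) blast
  have "\<exists>qbar. \<forall>f'\<in>F. \<forall>f''\<in>F. qbar * (norm (f' - f''))\<^sup>2 = (\<rho> f' - \<rho> f'') \<bullet> (\<sigma> f' - \<sigma> f'')"
    if \<rho>: "\<forall>f\<in>F. \<rho> f \<in> F" and \<sigma>: "\<forall>f\<in>F. \<sigma> f \<in> F"
      and q: "\<forall>f'\<in>F. \<forall>f''\<in>F. \<bar>q * (norm (f' - f''))\<^sup>2 - (\<rho> f' - \<rho> f'') \<bullet> (\<sigma> f' - \<sigma> f'')\<bar> \<le> \<epsilon>"
    for \<rho> \<sigma> :: "'a \<Rightarrow> 'a" and q
  proof -
    let ?n = "\<lambda>(a, b). (norm (a - b))\<^sup>2"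
    let ?D = "\<lambda>(a, b). (\<rho> a - \<rho> b) \<bullet> (\<sigma> a - \<sigma> b)"
    have D_in: "(\<rho> a - \<rho> b) \<bullet> (\<sigma> a - \<sigma> b) \<in> ?V" if "a \<in> F" "b \<in> F" for a b
      using that \<rho> \<sigma> by (intro image_eqI[of _ _ "(\<rho> a, \<rho> b, \<sigma> a, \<sigma> b)"]) auto
    have "\<exists>c. \<forall>x\<in>F \<times> F. c * ?n x = ?D x"
      by (rule exact[of ?n "F \<times> F" ?D q]) (use D_in q in auto)
    then show ?thesis
      by auto
  qed
  then show ?thesis
    using \<open>\<epsilon> > 0\<close> by blast
qed

end
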